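(* Let $|\psi\rangle$ be a state in a tensor-product Hilbert space $\mathcal H=\bigotimes_v\mathcal H_v$ of finite-dimensional factors. Let $U=\prod_vU_v$ be an on-site unitary, with each $U_v$ a unitary on $\mathcal H_v$. Let $A_1,\dots,A_n$ be regions and $t_1,\dots,t_n\in\mathbb R$. Then $U$ can be moved to any position in the sequence of instantaneous modular flows: for every $i\in\{1,\dots,n+1\}$, $$U\,\mathcal I_{A_n}(t_n)\cdots\mathcal I_{A_1}(t_1)|\psi\rangle=\mathcal I_{A_n}(t_n)\cdots\mathcal I_{A_i}(t_i)\,U\,\mathcal I_{A_{i-1}}(t_{i-1})\cdots\mathcal I_{A_1}(t_1)|\psi\rangle.$$ In particular, $U\,\mathcal I_{A_n}(t_n)\cdots\mathcal I_{A_1}(t_1)|\psi\rangle=\mathcal I_{A_n}(t_n)\cdots\mathcal I_{A_1}(t_1)\,U|\psi\rangle$.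
   Context: A region $X$ is a set of sites, and $\overline X$ is its complement. For a state $|\phi\rangle$, $\rho_X=\mathrm{Tr}_{\overline X}|\phi\rangle\langle\phi|$, and $\rho_X^{{\bf i}t}$ is defined spectrally on the support of $\rho_X$, with $0^{{\bf i}t}:=0$. Instantaneous modular flow: $\mathcal I_X(t)|\phi\rangle:=\rho_X^{{\bf i}t}|\phi\rangle$, where $\rho_X$ is taken from the current state $|\phi\rangle$ on which the map acts. In a product of such maps and unitaries, applied right to left, each $\mathcal I_X(t)$ uses the reduced density matrix of the state produced by everything to its right. The maps are nonlinear. *)

theory Defs
  imports "HOL-Analysis.Analysis"
begin

text \<open>Sites form a finite type 'v; site v carries the Hilbert space C^(d v) with
basis {0..<d v}.  Vectors of the tensor product space are
complex-valued functions on configurations of UNIV (values elsewhere ignored / 0).\<close>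

definition confX :: "('v \<Rightarrow> nat) \<Rightarrow> 'v set \<Rightarrow> ('v \<Rightarrow> nat) set" where
  "confX d X = {c. \<forall>v. (v \<in> X \<longrightarrow> c v < d v) \<and> (v \<notin> X \<longrightarrow> c v = 0)}"

definition conf :: "('v \<Rightarrow> nat) \<Rightarrow> ('v \<Rightarrow> nat) set" where
  "conf d = confX d UNIV"

definition merge :: "'v set \<Rightarrow> ('v \<Rightarrow> nat) \<Rightarrow> ('v \<Rightarrow> nat) \<Rightarrow> ('v \<Rightarrow> nat)" where
  "merge X a e = (\<lambda>v. if v \<in> X then a v else e v)"

definition restr :: "'v set \<Rightarrow> ('v \<Rightarrow> nat) \<Rightarrow> ('v \<Rightarrow> nat)" where
  "restr X c = (\<lambda>v. if v \<in> X then c v else 0)"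

text \<open>Reduced density matrix rho_X = Tr_{complement X} |phi><phi| (as a kernel on confX d X).\<close>
definition rdm :: "('v \<Rightarrow> nat) \<Rightarrow> 'v set \<Rightarrow> (('v \<Rightarrow> nat) \<Rightarrow> complex)
    \<Rightarrow> ('v \<Rightarrow> nat) \<Rightarrow> ('v \<Rightarrow> nat) \<Rightarrow> complex" where
  "rdm d X \<phi> a b = (\<Sum>e\<in>confX d (- X). \<phi> (merge X a e) * cnj (\<phi> (merge X b e)))"

definition is_eigvec :: "'i set \<Rightarrow> ('i \<Rightarrow> 'i \<Rightarrow> complex) \<Rightarrow> complex \<Rightarrow> ('i \<Rightarrow> complex) \<Rightarrow> bool" where
  "is_eigvec S K l x \<longleftrightarrow> (\<exists>a\<in>S. x a \<noteq> 0) \<and> (\<forall>a\<in>S. (\<Sum>b\<in>S. K a b * x b) = l * x a)"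

text \<open>Spectral functional calculus f(K) for a diagonalizable (here: Hermitian) kernel K:
the operator on span S acting as multiplication by f(lambda) on every eigenvector
with eigenvalue lambda.\<close>
definition mat_fun :: "'i set \<Rightarrow> (complex \<Rightarrow> complex) \<Rightarrow> ('i \<Rightarrow> 'i \<Rightarrow> complex) \<Rightarrow> ('i \<Rightarrow> 'i \<Rightarrow> complex)" where
  "mat_fun S f K = (THE M. (\<forall>a b. M a b \<noteq> 0 \<longrightarrow> a \<in> S \<and> b \<in> S) \<and>
      (\<forall>l x. is_eigvec S K l x \<longrightarrow> (\<forall>a\<in>S. (\<Sum>b\<in>S. M a b * x b) = f l * x a)))"

text \<open>rho^{it} with 0^{it} = 0 (complex powr gives 0 powr z = 0; for positive reals
it is exp(i t ln lambda)).\<close>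
definition rho_it :: "('v \<Rightarrow> nat) \<Rightarrow> 'v set \<Rightarrow> real \<Rightarrow> (('v \<Rightarrow> nat) \<Rightarrow> complex)
    \<Rightarrow> ('v \<Rightarrow> nat) \<Rightarrow> ('v \<Rightarrow> nat) \<Rightarrow> complex" where
  "rho_it d X t \<phi> = mat_fun (confX d X) (\<lambda>l. l powr (\<i> * complex_of_real t)) (rdm d X \<phi>)"

text \<open>Instantiated modular flow I_X(t) phi = (rho_X^{it} (x) 1) phi, with rho_X from phi itself.\<close>
definition imf :: "('v \<Rightarrow> nat) \<Rightarrow> 'v set \<Rightarrow> real \<Rightarrow> (('v \<Rightarrow> nat) \<Rightarrow> complex) \<Rightarrow> (('v \<Rightarrow> nat) \<Rightarrow> complex)" where
  "imf d X t \<phi> = (\<lambda>c. if c \<in> conf d then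
      (\<Sum>a\<in>confX d X. rho_it d X t \<phi> (restr X c) a * \<phi> (merge X a c)) else 0)"

text \<open>seqflow d A ts j k phi = I_{A_{j+k-1}}(t_{j+k-1}) ... I_{A_j}(t_j) phi.\<close>
fun seqflow :: "('v \<Rightarrow> nat) \<Rightarrow> (nat \<Rightarrow> 'v set) \<Rightarrow> (nat \<Rightarrow> real) \<Rightarrow> nat \<Rightarrow> nat
    \<Rightarrow> (('v \<Rightarrow> nat) \<Rightarrow> complex) \<Rightarrow> (('v \<Rightarrow> nat) \<Rightarrow> complex)" where
  "seqflow d A ts j 0 \<phi> = \<phi>"
| "seqflow d A ts j (Suc k) \<phi> = imf d (A (j + k)) (ts (j + k)) (seqflow d A ts j k \<phi>)"

definition unitary_site :: "nat \<Rightarrow> (nat \<Rightarrow> nat \<Rightarrow> complex) \<Rightarrow> bool" where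
  "unitary_site n W \<longleftrightarrow> (\<forall>i<n. \<forall>j<n. (\<Sum>k<n. cnj (W k i) * W k j) = (if i = j then 1 else 0))"

definition onsite :: "('v::finite \<Rightarrow> nat) \<Rightarrow> ('v \<Rightarrow> nat \<Rightarrow> nat \<Rightarrow> complex)
    \<Rightarrow> (('v \<Rightarrow> nat) \<Rightarrow> complex) \<Rightarrow> (('v \<Rightarrow> nat) \<Rightarrow> complex)" where
  "onsite d Us \<phi> = (\<lambda>c. if c \<in> conf d then
      (\<Sum>c'\<in>conf d. (\<Prod>v\<in>UNIV. Us v (c v) (c' v)) * \<phi> c') else 0)"

end

theory Submission
  imports Defs "HOL-Library.Function_Algebras" "HOL-Computational_Algebra.Fundamental_Theorem_Algebra"
begin

text \<open>An on-site unitary \<open>U = U\<^sub>X \<otimes> U\<^sub>X\<^sub>'\<close> (with \<open>X'\<close> the complement of \<open>X\<close>) acts on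
  reduced density matrices by conjugation, \<open>\<rho>\<^sub>X(U \<psi>) = U\<^sub>X \<rho>\<^sub>X(\<psi>) U\<^sub>X\<^sup>*\<close>, because
  \<open>U\<^sub>X\<^sub>'\<close> drops out of the partial trace.  The spectral calculus commutes with unitary
  conjugation, so \<open>\<rho>\<^sub>X(U \<psi>)\<^sup>i\<^sup>t = U\<^sub>X \<rho>\<^sub>X(\<psi>)\<^sup>i\<^sup>t U\<^sub>X\<^sup>*\<close> and hence
  \<open>\<I>\<^sub>X(t) (U \<psi>) = U \<I>\<^sub>X(t) \<psi>\<close>; induction along the sequence of flows moves \<open>U\<close> to any
  position.  Since \<open>mat_fun\<close> is a definite description, the real work is to show that it is
  well defined for Hermitian kernels: a polynomial interpolating \<open>f\<close> on the spectrum gives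
  existence, and diagonalisability of Hermitian kernels (via annihilating polynomials and the
  fundamental theorem of algebra) gives uniqueness.\<close>

section \<open>Polynomials in a kernel\<close>

definition kapply :: "'i set \<Rightarrow> ('i \<Rightarrow> 'i \<Rightarrow> complex) \<Rightarrow> ('i \<Rightarrow> complex) \<Rightarrow> ('i \<Rightarrow> complex)" where
  "kapply S K y = (\<lambda>a. if a \<in> S then (\<Sum>b\<in>S. K a b * y b) else 0)"

definition vscale :: "complex \<Rightarrow> ('i \<Rightarrow> complex) \<Rightarrow> ('i \<Rightarrow> complex)" where
  "vscale c y = (\<lambda>a. c * y a)"

definition supported_on :: "'i set \<Rightarrow> ('i \<Rightarrow> complex) \<Rightarrow> bool" where
  "supported_on S y \<longleftrightarrow> (\<forall>a. a \<notin> S \<longrightarrow> y a = 0)"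

definition unit_vec :: "'i \<Rightarrow> 'i \<Rightarrow> complex" where
  "unit_vec b = (\<lambda>a. if a = b then 1 else 0)"

lemma sum_fun_apply: "(sum F B) a = (\<Sum>b\<in>B. F b a)"
  by (induction B rule: infinite_finite_induct) auto

lemma kapply_add: "kapply S K (y + z) = kapply S K y + kapply S K z"
  by (auto simp: kapply_def distrib_left sum.distrib)

lemma kapply_vscale: "kapply S K (vscale c y) = vscale c (kapply S K y)"
  by (auto simp: kapply_def vscale_def sum_distrib_left ac_simps)

lemma kapply_zero [simp]: "kapply S K 0 = 0"
  by (auto simp: kapply_def)

lemma vscale_add_left: "vscale (a + b) y = vscale a y + vscale b y"
  by (auto simp: vscale_def distrib_right)

lemma vscale_add_right: "vscale c (y + z) = vscale c y + vscale c z"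
  by (auto simp: vscale_def distrib_left)

lemma vscale_vscale: "vscale c (vscale a y) = vscale (c * a) y"
  by (auto simp: vscale_def)

lemma vscale_zero [simp]: "vscale 0 y = 0" "vscale c 0 = 0"
  by (auto simp: vscale_def)

lemma vscale_one [simp]: "vscale 1 y = y"
  by (auto simp: vscale_def)

lemma supported_on_kapply: "supported_on S (kapply S K y)"
  by (auto simp: supported_on_def kapply_def)

lemma supported_on_vscale: "supported_on S y \<Longrightarrow> supported_on S (vscale c y)"
  by (auto simp: supported_on_def vscale_def)

lemma supported_on_unit_vec: "b \<in> S \<Longrightarrow> supported_on S (unit_vec b)"
  by (auto simp: supported_on_def unit_vec_def)

lemma supported_on_unit_vec_expansion:
  "finite S \<Longrightarrow> supported_on S y \<Longrightarrow> y = (\<Sum>b\<in>S. vscale (y b) (unit_vec b))"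
  by (rule ext) (simp add: sum_fun_apply vscale_def unit_vec_def supported_on_def if_distrib cong: if_cong)

text \<open>Horner evaluation of the vector \<open>p(K) y\<close>.\<close>
definition kpoly :: "'i set \<Rightarrow> ('i \<Rightarrow> 'i \<Rightarrow> complex) \<Rightarrow> complex poly \<Rightarrow> ('i \<Rightarrow> complex) \<Rightarrow> ('i \<Rightarrow> complex)" where
  "kpoly S K p y = fold_coeffs (\<lambda>c z. vscale c y + kapply S K z) p 0"

lemma kpoly_0 [simp]: "kpoly S K 0 y = 0"
  by (simp add: kpoly_def)

lemma kpoly_pCons: "kpoly S K (pCons c p) y = vscale c y + kapply S K (kpoly S K p y)"
proof (cases "p = 0 \<and> c = 0")
  case False
  then have "coeffs (pCons c p) = c # coeffs p"
    by (simp_all add: cCons_def)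
  then show ?thesis
    by (simp add: kpoly_def fold_coeffs_def)
qed simp

lemma kpoly_add: "kpoly S K (p + q) y = kpoly S K p y + kpoly S K q y"
proof (induction p arbitrary: q rule: pCons_induct)
  case (pCons a p)
  obtain b q' where q: "q = pCons b q'"
    by (cases q) auto
  show ?case
    by (simp only: q add_pCons kpoly_pCons pCons.IH vscale_add_left kapply_add add_ac)
qed simp

lemma kpoly_smult: "kpoly S K (smult c p) y = vscale c (kpoly S K p y)"
  by (induction p rule: pCons_induct)
     (simp_all only: smult_0_right kpoly_0 vscale_zero smult_pCons kpoly_pCons vscale_add_right
       vscale_vscale kapply_vscale)

lemma kpoly_zero_vec [simp]: "kpoly S K p 0 = 0"
  by (induction p rule: pCons_induct) (simp_all only: kpoly_0 kpoly_pCons vscale_zero kapply_zero add_0)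

lemma kpoly_add_vec: "kpoly S K p (y + z) = kpoly S K p y + kpoly S K p z"
  by (induction p rule: pCons_induct) (simp_all only: kpoly_0 kpoly_pCons vscale_add_right kapply_add add_ac add_0)

lemma kpoly_vscale: "kpoly S K p (vscale c y) = vscale c (kpoly S K p y)"
  by (induction p rule: pCons_induct)
     (simp_all only: kpoly_0 vscale_zero kpoly_pCons vscale_add_right vscale_vscale kapply_vscale mult.commute)

lemma kpoly_mult: "kpoly S K (p * q) y = kpoly S K p (kpoly S K q y)"
  by (induction p rule: pCons_induct)
     (simp_all only: mult_zero_left kpoly_0 mult_pCons_left kpoly_add kpoly_smult kpoly_pCons vscale_zero add_0)

lemma kpoly_one [simp]: "kpoly S K 1 y = y"
  by (simp add: one_pCons kpoly_pCons)

lemma kpoly_linear: "kpoly S K [:c, 1:] y = vscale c y + kapply S K y"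
  by (simp add: kpoly_pCons)

lemma kpoly_const: "kpoly S K [:c:] y = vscale c y"
  by (simp add: kpoly_pCons)

lemma kpoly_monom: "kpoly S K (monom c n) y = vscale c ((kapply S K ^^ n) y)"
  by (induction n) (simp_all add: monom_0 kpoly_const monom_Suc kpoly_pCons kapply_vscale)

lemma kpoly_sum: "finite I \<Longrightarrow> kpoly S K (\<Sum>i\<in>I. q i) y = (\<Sum>i\<in>I. kpoly S K (q i) y)"
  by (induction I rule: finite_induct) (simp_all add: kpoly_add)

lemma kpoly_sum_vec: "finite I \<Longrightarrow> kpoly S K p (\<Sum>i\<in>I. F i) = (\<Sum>i\<in>I. kpoly S K p (F i))"
proof (induction I rule: finite_induct)
  case (insert i I)
  then show ?case
    by (simp only: sum.insert[OF insert(1,2)] kpoly_add_vec)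
qed (simp only: sum.empty kpoly_zero_vec)

lemma kpoly_unit_vec_expansion:
  assumes "finite S" "supported_on S x"
  shows "kpoly S K p x = (\<Sum>b\<in>S. vscale (x b) (kpoly S K p (unit_vec b)))"
proof -
  have "kpoly S K p x = kpoly S K p (\<Sum>b\<in>S. vscale (x b) (unit_vec b))"
    by (rule arg_cong[where f = "kpoly S K p"]) (rule supported_on_unit_vec_expansion[OF assms])
  also have "\<dots> = (\<Sum>b\<in>S. vscale (x b) (kpoly S K p (unit_vec b)))"
    by (simp only: kpoly_sum_vec[OF assms(1)] kpoly_vscale)
  finally show ?thesis .
qed

lemma kpoly_eigvec: "kapply S K y = vscale l y \<Longrightarrow> kpoly S K p y = vscale (poly p l) y"
  by (induction p rule: pCons_induct)
     (simp_all only: kpoly_0 poly_0 vscale_zero kpoly_pCons kapply_vscale vscale_vscale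
       vscale_add_left poly_pCons mult.commute)

lemma supported_on_kpoly: "supported_on S y \<Longrightarrow> supported_on S (kpoly S K p y)"
  by (induction p rule: pCons_induct) (simp_all add: kpoly_pCons supported_on_def vscale_def kapply_def)

lemma kpoly_linear_eq_0_imp_eigvec:
  "kpoly S K [:-r, 1:] w = 0 \<Longrightarrow> kapply S K w = vscale r w"
  by (auto simp: kpoly_linear vscale_def fun_eq_iff add_eq_0_iff)

lemma supported_set_dependent:
  assumes fin: "finite S" and W: "finite W" "\<And>y. y \<in> W \<Longrightarrow> supported_on S y"
    and card: "card W > card S"
  obtains v where "\<exists>y\<in>W. v y \<noteq> 0" "(\<Sum>y\<in>W. vscale (v y) y) = 0"
proof -
  interpret fv: vector_space "vscale :: complex \<Rightarrow> ('i \<Rightarrow> complex) \<Rightarrow> ('i \<Rightarrow> complex)"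
    by unfold_locales (simp_all only: vscale_add_left vscale_add_right vscale_vscale vscale_one)
  have "W \<subseteq> fv.span (unit_vec ` S)"
  proof
    fix y assume "y \<in> W"
    then have "y = (\<Sum>b\<in>S. vscale (y b) (unit_vec b))"
      using supported_on_unit_vec_expansion[OF fin W(2)] by blast
    also have "\<dots> \<in> fv.span (unit_vec ` S)"
      by (intro fv.span_sum fv.span_scale fv.span_base) auto
    finally show "y \<in> fv.span (unit_vec ` S)" .
  qed
  moreover have "card W > card (unit_vec ` S)"
    using card card_image_le[OF fin, of unit_vec] by linarith
  ultimately have "fv.dependent W"
    using fv.independent_span_bound[OF finite_imageI[OF fin]] by (meson leD)
  then show ?thesis
    using fv.dependent_finite[OF W(1)] that by blast
qed

lemma supported_family_dependent:
  fixes w :: "nat \<Rightarrow> 'i \<Rightarrow> complex"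
  assumes fin: "finite S" and supp: "\<And>i. supported_on S (w i)"
  shows "\<exists>u. (\<exists>i\<le>card S. u i \<noteq> 0) \<and> (\<Sum>i\<le>card S. vscale (u i) (w i)) = 0"
proof (cases "inj_on w {..card S}")
  case False
  then obtain i j where ij: "i \<le> card S" "j \<le> card S" "i \<noteq> j" "w i = w j"
    unfolding inj_on_def by auto
  define u where "u k = (if k = i then 1 else 0) - (if k = j then 1 else 0 :: complex)" for k
  have "(\<Sum>k\<le>card S. vscale (u k) (w k)) a = w i a - w j a" for a
  proof -
    have "(\<Sum>k\<le>card S. vscale (u k) (w k)) a
        = (\<Sum>k\<le>card S. (if k = i then w k a else 0) - (if k = j then w k a else 0))"
      by (auto simp: sum_fun_apply vscale_def u_def left_diff_distrib intro!: sum.cong)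
    also have "\<dots> = w i a - w j a"
      using ij(1,2) by (simp only: sum_subtractf sum.delta finite_atMost atMost_iff if_True)
    finally show ?thesis .
  qed
  then have "(\<Sum>k\<le>card S. vscale (u k) (w k)) = 0"
    by (intro ext) (simp add: ij(4))
  moreover have "u i \<noteq> 0"
    using ij(3) by (simp add: u_def)
  ultimately show ?thesis
    using ij(1) by blast
next
  case True
  then have "card (w ` {..card S}) > card S"
    by (simp add: card_image)
  then obtain v where v: "\<exists>y\<in>w ` {..card S}. v y \<noteq> 0" "(\<Sum>y\<in>w ` {..card S}. vscale (v y) y) = 0"
    using supported_set_dependent[OF fin finite_imageI] supp by blast
  moreover have "(\<Sum>y\<in>w ` {..card S}. vscale (v y) y) = (\<Sum>i\<le>card S. vscale (v (w i)) (w i))"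
    by (rule sum.reindex_cong[OF True refl refl])
  ultimately show ?thesis
    by (intro exI[of _ "v \<circ> w"]) auto
qed

lemma exists_annihilating_poly:
  assumes "finite S" "supported_on S y"
  shows "\<exists>p. p \<noteq> 0 \<and> kpoly S K p y = 0"
proof -
  have iterates: "supported_on S ((kapply S K ^^ i) y)" for i
    using assms(2) by (induction i) (simp_all add: supported_on_kapply)
  obtain u where u: "\<exists>i\<le>card S. u i \<noteq> 0"
    "(\<Sum>i\<le>card S. vscale (u i) ((kapply S K ^^ i) y)) = 0"
    using supported_family_dependent[where w = "\<lambda>i. (kapply S K ^^ i) y", OF assms(1) iterates]
    by blast
  define p where "p = (\<Sum>i\<le>card S. monom (u i) i)"
  have "kpoly S K p y = 0"
    unfolding p_def by (simp only: kpoly_sum[OF finite_atMost] kpoly_monom u(2))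
  moreover obtain i where "i \<le> card S" "u i \<noteq> 0"
    using u(1) by blast
  then have "coeff p i \<noteq> 0"
    by (simp add: p_def coeff_sum coeff_monom)
  ultimately show ?thesis
    by (metis coeff_0)
qed

section \<open>Hermitian kernels are diagonalisable\<close>

definition inner_on :: "'i set \<Rightarrow> ('i \<Rightarrow> complex) \<Rightarrow> ('i \<Rightarrow> complex) \<Rightarrow> complex" where
  "inner_on S x y = (\<Sum>a\<in>S. cnj (x a) * y a)"

definition hermitian_on :: "'i set \<Rightarrow> ('i \<Rightarrow> 'i \<Rightarrow> complex) \<Rightarrow> bool" where
  "hermitian_on S K \<longleftrightarrow> (\<forall>a\<in>S. \<forall>b\<in>S. K a b = cnj (K b a))"

lemma inner_on_kapply:
  assumes "hermitian_on S K"
  shows "inner_on S (kapply S K x) y = inner_on S x (kapply S K y)"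
proof -
  have "inner_on S (kapply S K x) y = (\<Sum>a\<in>S. \<Sum>b\<in>S. cnj (K a b) * cnj (x b) * y a)"
    by (simp add: inner_on_def kapply_def sum_distrib_right)
  also have "\<dots> = (\<Sum>b\<in>S. \<Sum>a\<in>S. cnj (x b) * (K b a * y a))"
  proof (subst sum.swap, intro sum.cong refl)
    fix a b assume "a \<in> S" "b \<in> S"
    then have "cnj (K a b) = K b a"
      using assms unfolding hermitian_on_def by (metis complex_cnj_cnj)
    then show "cnj (K a b) * cnj (x b) * y a = cnj (x b) * (K b a * y a)"
      by (simp only: ac_simps)
  qed
  also have "\<dots> = inner_on S x (kapply S K y)"
    by (simp add: inner_on_def kapply_def sum_distrib_left)
  finally show ?thesis .
qed

lemma inner_on_vscale_left: "inner_on S (vscale c x) y = cnj c * inner_on S x y"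
  by (simp add: inner_on_def vscale_def sum_distrib_left ac_simps)

lemma inner_on_vscale_right: "inner_on S x (vscale c y) = c * inner_on S x y"
  by (simp add: inner_on_def vscale_def sum_distrib_left ac_simps)

lemma inner_on_add_left: "inner_on S (x + z) y = inner_on S x y + inner_on S z y"
  by (simp add: inner_on_def distrib_right sum.distrib)

lemma inner_on_self_eq_0D:
  assumes "finite S" "inner_on S x x = 0" "a \<in> S"
  shows "x a = 0"
proof -
  have "inner_on S x x = complex_of_real (\<Sum>b\<in>S. (norm (x b))\<^sup>2)"
    unfolding inner_on_def of_real_sum
    by (intro sum.cong refl) (simp only: complex_norm_square mult.commute)
  with assms(2) have "(\<Sum>b\<in>S. (norm (x b))\<^sup>2) = 0"
    by (metis of_real_eq_0_iff)
  with assms(1,3) show ?thesis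
    by (simp add: sum_nonneg_eq_0_iff)
qed

text \<open>With \<open>w = (K - r) v\<close> an eigenvector for \<open>r\<close>, self-adjointness gives both
  \<open>(r - cnj r) \<langle>w, w\<rangle> = 0\<close> and \<open>\<langle>w, w\<rangle> = (r - cnj r) \<langle>v, w\<rangle>\<close>.\<close>
lemma hermitian_generalized_eigvec_is_eigvec:
  assumes fin: "finite S" and herm: "hermitian_on S K" and supp: "supported_on S v"
    and sq: "kpoly S K [:-r, 1:] (kpoly S K [:-r, 1:] v) = 0"
  shows "kpoly S K [:-r, 1:] v = 0"
proof -
  define w where "w = kpoly S K [:-r, 1:] v"
  have eig: "kapply S K w = vscale r w"
    using sq unfolding w_def by (rule kpoly_linear_eq_0_imp_eigvec)
  have "r * inner_on S w w = cnj r * inner_on S w w"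
    using inner_on_kapply[OF herm, of w w] by (simp only: eig inner_on_vscale_left inner_on_vscale_right)
  then have ww: "(r - cnj r) * inner_on S w w = 0"
    by (simp add: algebra_simps)
  have "inner_on S w w = cnj (-r) * inner_on S v w + inner_on S v (kapply S K w)"
    by (simp only: w_def kpoly_linear inner_on_add_left inner_on_vscale_left inner_on_kapply[OF herm])
  also have "\<dots> = (r - cnj r) * inner_on S v w"
    by (simp only: eig inner_on_vscale_right) (simp add: algebra_simps)
  finally have "inner_on S w w = 0"
    using ww by (metis mult_zero_left no_zero_divisors)
  moreover have "supported_on S w"
    unfolding w_def by (rule supported_on_kpoly[OF supp])
  ultimately show ?thesis
    using inner_on_self_eq_0D[OF fin] unfolding w_def supported_on_def by (metis ext zero_fun_apply)
qed

inductive eigen_sum :: "'i set \<Rightarrow> ('i \<Rightarrow> 'i \<Rightarrow> complex) \<Rightarrow> ('i \<Rightarrow> complex) \<Rightarrow> bool" for S K where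
  eigen_sum_0: "eigen_sum S K 0"
| eigen_sum_add_eigvec:
    "supported_on S y \<Longrightarrow> kapply S K y = vscale l y \<Longrightarrow> eigen_sum S K z \<Longrightarrow> eigen_sum S K (y + z)"

lemma eigen_sum_add: "eigen_sum S K y \<Longrightarrow> eigen_sum S K z \<Longrightarrow> eigen_sum S K (y + z)"
  by (induction rule: eigen_sum.induct) (simp_all add: add.assoc eigen_sum_add_eigvec)

lemma eigen_sum_eigvec: "supported_on S y \<Longrightarrow> kapply S K y = vscale l y \<Longrightarrow> eigen_sum S K y"
  using eigen_sum_add_eigvec[OF _ _ eigen_sum_0] by (metis add_0_right)

text \<open>Since \<open>q(r) \<noteq> 0\<close>, we have \<open>1 = (X - r) a + q / q(r)\<close> for some \<open>a\<close>; splitting \<open>y\<close>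
  accordingly separates its \<open>r\<close>-eigencomponent.\<close>
lemma kpoly_split_off_eigvec:
  assumes supp: "supported_on S y" and ann: "kpoly S K ([:-r, 1:] * q) y = 0"
    and root: "poly q r \<noteq> 0"
  obtains u w where "y = u + w" "supported_on S u" "kpoly S K q u = 0"
    "supported_on S w" "kapply S K w = vscale r w"
proof -
  define c where "c = 1 / poly q r"
  have "poly (1 - smult c q) r = 0"
    using root by (simp add: c_def)
  then have "[:-r, 1:] dvd 1 - smult c q"
    by (simp only: poly_eq_0_iff_dvd)
  then obtain a where a: "1 - smult c q = [:-r, 1:] * a"
    by (elim dvdE)
  define u where "u = kpoly S K ([:-r, 1:] * a) y"
  define w where "w = vscale c (kpoly S K q y)"
  have "1 = [:-r, 1:] * a + smult c q"
    using a by (simp add: algebra_simps)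
  then have "y = u + w"
    by (metis kpoly_one kpoly_add kpoly_smult u_def w_def)
  moreover have "kpoly S K q u = kpoly S K a (kpoly S K ([:-r, 1:] * q) y)"
    unfolding u_def by (simp only: kpoly_mult[symmetric] ac_simps)
  then have "kpoly S K q u = 0"
    by (simp only: ann kpoly_zero_vec)
  moreover have "kpoly S K [:-r, 1:] w = vscale c (kpoly S K ([:-r, 1:] * q) y)"
    by (simp only: w_def kpoly_vscale kpoly_mult)
  then have "kapply S K w = vscale r w"
    by (intro kpoly_linear_eq_0_imp_eigvec) (simp only: ann vscale_zero)
  moreover have "supported_on S u" "supported_on S w"
    unfolding u_def w_def by (simp_all add: supp supported_on_kpoly supported_on_vscale)
  ultimately show ?thesis
    using that by blast
qed

lemma hermitian_kpoly_drop_repeated_root: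
  assumes fin: "finite S" and herm: "hermitian_on S K" and supp: "supported_on S y"
    and ann: "kpoly S K ([:-r, 1:] * q) y = 0" and root: "poly q r = 0"
  shows "kpoly S K q y = 0"
proof -
  obtain q' where q': "q = [:-r, 1:] * q'"
    using root by (metis poly_eq_0_iff_dvd dvdE)
  have "kpoly S K [:-r, 1:] (kpoly S K [:-r, 1:] (kpoly S K q' y)) = 0"
    using ann by (simp only: q' kpoly_mult)
  then have "kpoly S K [:-r, 1:] (kpoly S K q' y) = 0"
    by (rule hermitian_generalized_eigvec_is_eigvec[OF fin herm supported_on_kpoly[OF supp]])
  then show ?thesis
    by (simp only: q' kpoly_mult)
qed

lemma eigen_sum_if_annihilated:
  assumes fin: "finite S" and herm: "hermitian_on S K"
  shows "p \<noteq> 0 \<Longrightarrow> supported_on S y \<Longrightarrow> kpoly S K p y = 0 \<Longrightarrow> eigen_sum S K y"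
proof (induction "degree p" arbitrary: p y rule: less_induct)
  case less
  show ?case
  proof (cases "degree p = 0")
    case True
    then obtain c where "p = [:c:]" "c \<noteq> 0"
      using less.prems(1) by (metis degree_eq_zeroE pCons_0_0)
    then have "y = 0"
      using less.prems(3) by (simp add: kpoly_const vscale_def fun_eq_iff)
    then show ?thesis
      by (simp only: eigen_sum_0)
  next
    case False
    then obtain r where "poly p r = 0"
      using fundamental_theorem_of_algebra constant_degree by metis
    then obtain q where p: "p = [:-r, 1:] * q"
      by (metis poly_eq_0_iff_dvd dvdE)
    with less.prems(1) have "q \<noteq> 0"
      by auto
    moreover have "degree p = degree [:-r, 1:] + degree q"
      unfolding p using \<open>q \<noteq> 0\<close> by (intro degree_mult_eq) simp_all
    ultimately have q: "q \<noteq> 0" "degree q < degree p"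
      by simp_all
    note ann = less.prems(3)[unfolded p]
    show ?thesis
    proof (cases "poly q r = 0")
      case True
      then show ?thesis
        using less.hyps[OF q(2,1) less.prems(2)]
          hermitian_kpoly_drop_repeated_root[OF fin herm less.prems(2) ann] by blast
    next
      case False
      obtain u w where "y = u + w" "supported_on S u" "kpoly S K q u = 0"
        "supported_on S w" "kapply S K w = vscale r w"
        using kpoly_split_off_eigvec[OF less.prems(2) ann False] by blast
      then show ?thesis
        using less.hyps[OF q(2,1)] eigen_sum_add eigen_sum_eigvec by metis
    qed
  qed
qed

lemma hermitian_eigen_sum:
  assumes "finite S" "hermitian_on S K" "supported_on S y"
  shows "eigen_sum S K y"
  using exists_annihilating_poly[OF assms(1,3)] eigen_sum_if_annihilated[OF assms(1,2)] assms(3)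
  by blast

section \<open>Spectral functional calculus\<close>

definition is_mat_fun ::
    "'i set \<Rightarrow> (complex \<Rightarrow> complex) \<Rightarrow> ('i \<Rightarrow> 'i \<Rightarrow> complex) \<Rightarrow> ('i \<Rightarrow> 'i \<Rightarrow> complex) \<Rightarrow> bool" where
  "is_mat_fun S f K M \<longleftrightarrow> (\<forall>a b. M a b \<noteq> 0 \<longrightarrow> a \<in> S \<and> b \<in> S) \<and>
      (\<forall>l x. is_eigvec S K l x \<longrightarrow> (\<forall>a\<in>S. (\<Sum>b\<in>S. M a b * x b) = f l * x a))"

lemma is_eigvecI:
  assumes "supported_on S y" "kapply S K y = vscale l y" "y a \<noteq> 0"
  shows "is_eigvec S K l y"
proof -
  have "a \<in> S"
    using assms(1,3) by (auto simp: supported_on_def)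
  moreover have "(\<Sum>b\<in>S. K c b * y b) = l * y c" if "c \<in> S" for c
    using fun_cong[OF assms(2), of c] that by (simp add: kapply_def vscale_def)
  ultimately show ?thesis
    using assms(3) unfolding is_eigvec_def by blast
qed

lemma is_eigvec_restrict:
  assumes "is_eigvec S K l x"
  defines "x' \<equiv> \<lambda>a. if a \<in> S then x a else 0"
  shows "supported_on S x'" "kapply S K x' = vscale l x'"
proof -
  show "supported_on S x'"
    by (simp add: supported_on_def x'_def)
  have "(\<Sum>b\<in>S. K a b * x' b) = l * x a" if "a \<in> S" for a
  proof -
    have "(\<Sum>b\<in>S. K a b * x' b) = (\<Sum>b\<in>S. K a b * x b)"
      by (intro sum.cong) (simp_all add: x'_def)
    then show ?thesis
      using assms(1) that by (simp add: is_eigvec_def)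
  qed
  then show "kapply S K x' = vscale l x'"
    by (simp add: kapply_def vscale_def x'_def fun_eq_iff)
qed

lemma is_mat_fun_agree_on_eigen_sum:
  assumes M1: "is_mat_fun S f K M1" and M2: "is_mat_fun S f K M2" and a: "a \<in> S"
  shows "eigen_sum S K y \<Longrightarrow> (\<Sum>b\<in>S. M1 a b * y b) = (\<Sum>b\<in>S. M2 a b * y b)"
proof (induction rule: eigen_sum.induct)
  case (eigen_sum_add_eigvec y l z)
  have "(\<Sum>b\<in>S. M1 a b * y b) = (\<Sum>b\<in>S. M2 a b * y b)"
  proof (cases "\<exists>c. y c \<noteq> 0")
    case True
    then obtain c where "y c \<noteq> 0"
      by blast
    then have "is_eigvec S K l y"
      by (rule is_eigvecI[OF eigen_sum_add_eigvec.hyps(1,2)])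
    then have "(\<Sum>b\<in>S. M1 a b * y b) = f l * y a" "(\<Sum>b\<in>S. M2 a b * y b) = f l * y a"
      using M1 M2 a unfolding is_mat_fun_def by (meson, meson)
    then show ?thesis
      by (rule trans[OF _ sym])
  qed simp
  with eigen_sum_add_eigvec.IH show ?case
    by (simp only: plus_fun_apply distrib_left sum.distrib)
qed simp

lemma is_mat_fun_unique:
  assumes fin: "finite S" and herm: "hermitian_on S K"
    and M1: "is_mat_fun S f K M1" and M2: "is_mat_fun S f K M2"
  shows "M1 = M2"
proof (intro ext)
  fix a b
  show "M1 a b = M2 a b"
  proof (cases "a \<in> S \<and> b \<in> S")
    case True
    then have "eigen_sum S K (unit_vec b)"
      by (intro hermitian_eigen_sum[OF fin herm] supported_on_unit_vec) simp
    then have "(\<Sum>c\<in>S. M1 a c * unit_vec b c) = (\<Sum>c\<in>S. M2 a c * unit_vec b c)"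
      using is_mat_fun_agree_on_eigen_sum[OF M1 M2] True by blast
    then show ?thesis
      using True fin by (simp add: unit_vec_def if_distrib cong: if_cong)
  next
    case False
    then have "M1 a b = 0" "M2 a b = 0"
      using M1 M2 unfolding is_mat_fun_def by (meson, meson)
    then show ?thesis
      by simp
  qed
qed

lemma exists_poly_annihilating_supported:
  assumes fin: "finite S"
  obtains q where "q \<noteq> 0" "\<And>x. supported_on S x \<Longrightarrow> kpoly S K q x = 0"
proof -
  obtain P where P: "\<And>b. b \<in> S \<Longrightarrow> P b \<noteq> 0 \<and> kpoly S K (P b) (unit_vec b) = 0"
    using exists_annihilating_poly[OF fin supported_on_unit_vec, of _ K] by metis
  define q where "q = (\<Prod>b\<in>S. P b)"
  have unit: "kpoly S K q (unit_vec b) = 0" if "b \<in> S" for b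
  proof -
    have "q = (\<Prod>c\<in>S - {b}. P c) * P b"
      using fin that by (simp add: q_def prod.remove mult.commute)
    then show ?thesis
      using P[OF that] by (simp only: kpoly_mult kpoly_zero_vec)
  qed
  have "kpoly S K q x = 0" if "supported_on S x" for x
    by (simp add: kpoly_unit_vec_expansion[OF fin that] unit)
  moreover have "q \<noteq> 0"
    using P fin by (simp add: q_def prod_zero_iff)
  ultimately show ?thesis
    using that by blast
qed

lemma exists_interpolating_poly:
  "finite R \<Longrightarrow> \<exists>g. \<forall>r\<in>R. poly g r = (f r :: complex)"
proof (induction R rule: finite_induct)
  case (insert r R)
  then obtain g where g: "\<forall>s\<in>R. poly g s = f s"
    by blast
  define z where "z = (\<Prod>s\<in>R. [:-s, 1:])"
  have "poly z r \<noteq> 0" "\<forall>s\<in>R. poly z s = 0"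
    using insert(1,2) by (auto simp: z_def poly_prod prod_zero_iff)
  then have "\<forall>s\<in>insert r R. poly (g + smult ((f r - poly g r) / poly z r) z) s = f s"
    using g by auto
  then show ?case
    by blast
qed simp

text \<open>The matrix of \<open>g(K)\<close>, for \<open>g\<close> interpolating \<open>f\<close> on the roots of a polynomial
  annihilating every vector, acts as \<open>f(l)\<close> on each eigenvector: \<open>l\<close> is such a root.\<close>
lemma is_mat_fun_exists:
  assumes fin: "finite S"
  shows "\<exists>M. is_mat_fun S f K M"
proof -
  obtain q where q: "q \<noteq> 0" "\<And>x. supported_on S x \<Longrightarrow> kpoly S K q x = 0"
    using exists_poly_annihilating_supported[OF fin] by blast
  obtain g where g: "\<And>r. poly q r = 0 \<Longrightarrow> poly g r = f r"
    using exists_interpolating_poly[OF poly_roots_finite[OF q(1)]] by blast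
  define M where "M a b = (if a \<in> S \<and> b \<in> S then kpoly S K g (unit_vec b) a else 0)" for a b
  have "(\<Sum>b\<in>S. M a b * x b) = f l * x a" if eig: "is_eigvec S K l x" and a: "a \<in> S" for l x a
  proof -
    define x' where "x' = (\<lambda>a. if a \<in> S then x a else 0)"
    have x': "supported_on S x'" "kapply S K x' = vscale l x'"
      using is_eigvec_restrict[OF eig] unfolding x'_def by blast+
    obtain a0 where "a0 \<in> S" "x a0 \<noteq> 0"
      using eig by (auto simp: is_eigvec_def)
    moreover have "vscale (poly q l) x' = 0"
      using q(2)[OF x'(1)] kpoly_eigvec[OF x'(2)] by simp
    ultimately have "poly g l = f l"
      using g by (metis vscale_def x'_def mult_eq_0_iff zero_fun_apply)
    have "(\<Sum>b\<in>S. M a b * x b) = (\<Sum>b\<in>S. vscale (x' b) (kpoly S K g (unit_vec b))) a"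
      using a by (simp add: sum_fun_apply M_def x'_def vscale_def mult.commute)
    also have "\<dots> = kpoly S K g x' a"
      by (simp only: kpoly_unit_vec_expansion[OF fin x'(1)])
    also have "\<dots> = f l * x a"
      using kpoly_eigvec[OF x'(2), of g] \<open>poly g l = f l\<close> a by (simp add: vscale_def x'_def)
    finally show ?thesis .
  qed
  then have "is_mat_fun S f K M"
    unfolding is_mat_fun_def M_def by auto
  then show ?thesis
    by blast
qed

lemma mat_fun_is_mat_fun:
  assumes "finite S" "hermitian_on S K"
  shows "is_mat_fun S f K (mat_fun S f K)"
proof -
  have "\<exists>!M. is_mat_fun S f K M"
    using is_mat_fun_exists[OF assms(1)] is_mat_fun_unique[OF assms] by blast
  then show ?thesis
    unfolding mat_fun_def is_mat_fun_def[symmetric] by (rule theI')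
qed

lemma mat_fun_eqI:
  assumes "finite S" "hermitian_on S K" "is_mat_fun S f K M"
  shows "mat_fun S f K = M"
  using is_mat_fun_unique[OF assms(1,2) mat_fun_is_mat_fun[OF assms(1,2)] assms(3)] .

section \<open>Unitary conjugation\<close>

definition kmult_vec :: "'i set \<Rightarrow> ('j \<Rightarrow> 'i \<Rightarrow> complex) \<Rightarrow> ('i \<Rightarrow> complex) \<Rightarrow> ('j \<Rightarrow> complex)" where
  "kmult_vec S A x = (\<lambda>a. \<Sum>b\<in>S. A a b * x b)"

definition kmult :: "'i set \<Rightarrow> ('j \<Rightarrow> 'i \<Rightarrow> complex) \<Rightarrow> ('i \<Rightarrow> 'k \<Rightarrow> complex) \<Rightarrow> ('j \<Rightarrow> 'k \<Rightarrow> complex)" where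
  "kmult S A B = (\<lambda>a c. \<Sum>k\<in>S. A a k * B k c)"

definition kadj :: "('i \<Rightarrow> 'j \<Rightarrow> complex) \<Rightarrow> ('j \<Rightarrow> 'i \<Rightarrow> complex)" where
  "kadj A = (\<lambda>a b. cnj (A b a))"

definition unitary_on :: "'i set \<Rightarrow> ('i \<Rightarrow> 'i \<Rightarrow> complex) \<Rightarrow> bool" where
  "unitary_on S W \<longleftrightarrow> (\<forall>a\<in>S. \<forall>b\<in>S. kmult S (kadj W) W a b = (if a = b then 1 else 0))"

lemma kadj_kadj [simp]: "kadj (kadj A) = A"
  by (simp add: kadj_def)

lemma kmult_vec_kmult: "kmult_vec S (kmult S' A B) x a = kmult_vec S' A (kmult_vec S B x) a"
proof -
  have "kmult_vec S (kmult S' A B) x a = (\<Sum>b\<in>S. \<Sum>k\<in>S'. A a k * (B k b * x b))"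
    by (simp add: kmult_vec_def kmult_def sum_distrib_right mult.assoc)
  also have "\<dots> = kmult_vec S' A (kmult_vec S B x) a"
    by (subst sum.swap) (simp add: kmult_vec_def sum_distrib_left)
  finally show ?thesis .
qed

lemma kmult_assoc: "kmult S2 (kmult S1 A B) C a c = kmult S1 A (kmult S2 B C) a c"
  using kmult_vec_kmult[of S2 S1 A B "\<lambda>b. C b c" a] by (simp add: kmult_vec_def kmult_def)

lemma kmult_vec_cong: "(\<And>b. b \<in> S \<Longrightarrow> x b = y b) \<Longrightarrow> kmult_vec S A x a = kmult_vec S A y a"
  by (simp add: kmult_vec_def)

lemma kmult_vec_cong_kernel:
  "(\<And>b. b \<in> S \<Longrightarrow> A a b = B a b) \<Longrightarrow> kmult_vec S A x a = kmult_vec S B x a"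
  by (simp add: kmult_vec_def)

lemma kmult_vec_scale: "kmult_vec S A (\<lambda>b. l * x b) a = l * kmult_vec S A x a"
  by (simp add: kmult_vec_def sum_distrib_left ac_simps)

lemma unitary_on_cancel:
  assumes "finite S" "unitary_on S W" "a \<in> S"
  shows "kmult_vec S (kadj W) (kmult_vec S W x) a = x a"
proof -
  have "kmult_vec S (kadj W) (kmult_vec S W x) a = kmult_vec S (kmult S (kadj W) W) x a"
    by (rule kmult_vec_kmult[symmetric])
  also have "\<dots> = (\<Sum>b\<in>S. if a = b then x b else 0)"
    unfolding kmult_vec_def using assms(2,3) by (intro sum.cong) (simp_all add: unitary_on_def)
  also have "\<dots> = x a"
    using assms(1,3) by simp
  finally show ?thesis .
qed

lemma trace_kmult_commute: "(\<Sum>a\<in>S. kmult T A B a a) = (\<Sum>k\<in>T. kmult S B A k k)"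
  by (simp add: kmult_def mult.commute) (rule sum.swap)

text \<open>\<open>\<Sum>\<^sub>a\<^sub>b |\<delta>\<^sub>a\<^sub>b - P\<^sub>a\<^sub>b|\<^sup>2 =
  \<Sum>\<^sub>a (1 - 2 P\<^sub>a\<^sub>a + (P P)\<^sub>a\<^sub>a) = card S - tr P = 0\<close>.\<close>
lemma projection_full_trace_eq_id:
  assumes fin: "finite S" and herm: "hermitian_on S P"
    and idem: "\<And>a. a \<in> S \<Longrightarrow> kmult S P P a a = P a a"
    and trace: "(\<Sum>a\<in>S. P a a) = of_nat (card S)"
    and a: "a \<in> S" and b: "b \<in> S"
  shows "P a b = (if a = b then 1 else 0)"
proof -
  define Q where "Q a b = (if a = b then 1 else 0) - P a b" for a b
  have row: "(\<Sum>b\<in>S. Q a b * cnj (Q a b)) = 1 - P a a" if "a \<in> S" for a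
  proof -
    have "cnj (P a b) = P b a" if "b \<in> S" for b
      using herm \<open>a \<in> S\<close> that unfolding hermitian_on_def by (metis complex_cnj_cnj)
    then have "(\<Sum>b\<in>S. Q a b * cnj (Q a b))
        = (\<Sum>b\<in>S. (if a = b then 1 - P a b - P b a else 0) + P a b * P b a)"
      by (intro sum.cong refl) (simp add: Q_def algebra_simps)
    also have "\<dots> = 1 - P a a"
      using fin that idem[OF that] by (simp add: sum.distrib kmult_def)
    finally show ?thesis .
  qed
  have "complex_of_real (\<Sum>a\<in>S. \<Sum>b\<in>S. (norm (Q a b))\<^sup>2) = (\<Sum>a\<in>S. \<Sum>b\<in>S. Q a b * cnj (Q a b))"
    by (simp only: of_real_sum complex_norm_square)
  also have "\<dots> = 0"
    using trace by (simp add: row sum_subtractf)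
  finally have "(\<Sum>a\<in>S. \<Sum>b\<in>S. (norm (Q a b))\<^sup>2) = 0"
    by (simp only: of_real_eq_0_iff)
  then have "(norm (Q a b))\<^sup>2 = 0"
    using fin a b by (simp add: sum_nonneg_eq_0_iff sum_nonneg)
  then show ?thesis
    by (simp add: Q_def)
qed

lemma unitary_on_kadj:
  assumes fin: "finite S" and U: "unitary_on S W"
  shows "unitary_on S (kadj W)"
proof -
  define P where "P = kmult S W (kadj W)"
  have "hermitian_on S P"
    by (simp add: hermitian_on_def P_def kmult_def kadj_def mult.commute)
  moreover have "kmult S P P a a = P a a" if "a \<in> S" for a
  proof -
    have "kmult S P P a a = (\<Sum>k\<in>S. W a k * kmult S (kadj W) (kmult S W (kadj W)) k a)"
      by (simp only: P_def kmult_assoc) (simp only: kmult_def)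
    also have "\<dots> = (\<Sum>k\<in>S. W a k * kadj W k a)"
      using unitary_on_cancel[OF fin U, of _ "\<lambda>j. kadj W j a"]
      by (intro sum.cong refl) (simp add: kmult_vec_def kmult_def)
    finally show ?thesis
      by (simp add: P_def kmult_def)
  qed
  moreover have "(\<Sum>a\<in>S. P a a) = of_nat (card S)"
    using U by (simp add: P_def trace_kmult_commute unitary_on_def)
  ultimately have "P a b = (if a = b then 1 else 0)" if "a \<in> S" "b \<in> S" for a b
    using projection_full_trace_eq_id[OF fin] that by blast
  then show ?thesis
    by (simp add: unitary_on_def P_def)
qed

lemma is_eigvec_conj:
  assumes fin: "finite S" and U: "unitary_on S W"
    and K': "\<And>a b. a \<in> S \<Longrightarrow> b \<in> S \<Longrightarrow> K' a b = kmult S (kmult S W K) (kadj W) a b"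
    and eig: "is_eigvec S K' l x"
  shows "is_eigvec S K l (kmult_vec S (kadj W) x)"
proof -
  define y where "y = kmult_vec S (kadj W) x"
  have Wy: "kmult_vec S W y c = x c" if "c \<in> S" for c
    using unitary_on_cancel[OF fin unitary_on_kadj[OF fin U] that] by (simp add: y_def)
  have "kmult_vec S K y c = l * y c" if c: "c \<in> S" for c
  proof -
    have "l * y c = kmult_vec S (kadj W) (kmult_vec S K' x) c"
      unfolding y_def kmult_vec_scale[symmetric]
      using eig by (intro kmult_vec_cong) (simp add: is_eigvec_def kmult_vec_def)
    also have "\<dots> = kmult_vec S (kadj W) (kmult_vec S (kmult S (kmult S W K) (kadj W)) x) c"
      using K' by (intro kmult_vec_cong kmult_vec_cong_kernel) simp
    also have "\<dots> = kmult_vec S (kadj W) (kmult_vec S W (kmult_vec S K y)) c"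
      by (intro kmult_vec_cong) (simp only: kmult_vec_kmult y_def)
    also have "\<dots> = kmult_vec S K y c"
      by (rule unitary_on_cancel[OF fin U c])
    finally show ?thesis
      by simp
  qed
  moreover obtain a0 where "a0 \<in> S" "x a0 \<noteq> 0"
    using eig by (auto simp: is_eigvec_def)
  then have "\<exists>b\<in>S. y b \<noteq> 0"
    using Wy[of a0] unfolding kmult_vec_def by (metis (no_types, lifting) mult_zero_right sum.neutral)
  ultimately show ?thesis
    by (simp add: is_eigvec_def kmult_vec_def y_def)
qed

lemma is_mat_fun_conj:
  assumes fin: "finite S" and U: "unitary_on S W"
    and K': "\<And>a b. a \<in> S \<Longrightarrow> b \<in> S \<Longrightarrow> K' a b = kmult S (kmult S W K) (kadj W) a b"
    and M: "is_mat_fun S f K M"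
  shows "is_mat_fun S f K' (\<lambda>a b. if a \<in> S \<and> b \<in> S then kmult S (kmult S W M) (kadj W) a b else 0)"
  unfolding is_mat_fun_def
proof (intro conjI allI impI ballI)
  fix l x a assume eig: "is_eigvec S K' l x" and a: "a \<in> S"
  define y where "y = kmult_vec S (kadj W) x"
  have "is_eigvec S K l y"
    unfolding y_def by (rule is_eigvec_conj[OF fin U K' eig])
  then have My: "kmult_vec S M y c = f l * y c" if "c \<in> S" for c
    using M that unfolding is_mat_fun_def kmult_vec_def by blast
  have "(\<Sum>b\<in>S. (if a \<in> S \<and> b \<in> S then kmult S (kmult S W M) (kadj W) a b else 0) * x b)
      = kmult_vec S (kmult S (kmult S W M) (kadj W)) x a"
    using a by (simp add: kmult_vec_def)
  also have "\<dots> = kmult_vec S W (kmult_vec S M y) a"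
    by (simp only: kmult_vec_kmult y_def)
  also have "\<dots> = f l * kmult_vec S W y a"
    by (simp add: kmult_vec_cong[OF My] kmult_vec_scale)
  also have "\<dots> = f l * x a"
    using unitary_on_cancel[OF fin unitary_on_kadj[OF fin U] a] by (simp add: y_def)
  finally show "(\<Sum>b\<in>S. (if a \<in> S \<and> b \<in> S then kmult S (kmult S W M) (kadj W) a b else 0) * x b)
      = f l * x a" .
qed (simp_all split: if_splits)

lemma inner_on_unitary:
  assumes fin: "finite T" and U: "unitary_on T V"
  shows "inner_on T (kmult_vec T V x) (kmult_vec T V y) = inner_on T x y"
proof -
  have "inner_on T (kmult_vec T V x) (kmult_vec T V y)
      = (\<Sum>e'\<in>T. \<Sum>e''\<in>T. cnj (x e') * y e'' * kmult T (kadj V) V e' e'')"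
    by (simp add: inner_on_def kmult_vec_def kmult_def kadj_def cnj_sum sum_product
        sum_distrib_left ac_simps) (subst sum.swap, subst (2) sum.swap, rule refl)
  also have "\<dots> = (\<Sum>e'\<in>T. \<Sum>e''\<in>T. if e' = e'' then cnj (x e') * y e'' else 0)"
    using U unfolding unitary_on_def by (intro sum.cong refl) simp
  also have "\<dots> = inner_on T x y"
    using fin by (simp add: inner_on_def)
  finally show ?thesis .
qed

lemma gram_kmult_vec:
  "(\<Sum>e\<in>T. kmult_vec S U (\<lambda>i. Z i e) a * cnj (kmult_vec S U (\<lambda>j. Z j e) b))
    = kmult S (kmult S U (\<lambda>i j. \<Sum>e\<in>T. Z i e * cnj (Z j e))) (kadj U) a b"
proof -
  let ?F = "\<lambda>e i j. U a i * Z i e * (cnj (U b j) * cnj (Z j e))"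
  have "(\<Sum>e\<in>T. kmult_vec S U (\<lambda>i. Z i e) a * cnj (kmult_vec S U (\<lambda>j. Z j e) b))
      = (\<Sum>e\<in>T. \<Sum>i\<in>S. \<Sum>j\<in>S. ?F e i j)"
    by (simp only: kmult_vec_def cnj_sum complex_cnj_mult sum_product)
  also have "\<dots> = (\<Sum>i\<in>S. \<Sum>j\<in>S. \<Sum>e\<in>T. ?F e i j)"
    by (subst sum.swap) (simp only: sum.swap[of _ T])
  also have "\<dots> = (\<Sum>j\<in>S. \<Sum>i\<in>S. \<Sum>e\<in>T. ?F e i j)"
    by (rule sum.swap)
  also have "\<dots> = kmult S (kmult S U (\<lambda>i j. \<Sum>e\<in>T. Z i e * cnj (Z j e))) (kadj U) a b"
    by (simp add: kmult_def kadj_def sum_distrib_left sum_distrib_right ac_simps)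
  finally show ?thesis .
qed

lemma kmult_vec_swap:
  "kmult_vec T B (\<lambda>e. kmult_vec S A (\<lambda>a. F a e) a0) e0 = kmult_vec S A (\<lambda>a. kmult_vec T B (F a) e0) a0"
proof -
  have "kmult_vec T B (\<lambda>e. kmult_vec S A (\<lambda>a. F a e) a0) e0 = (\<Sum>e\<in>T. \<Sum>a\<in>S. A a0 a * (B e0 e * F a e))"
    by (simp add: kmult_vec_def sum_distrib_left mult.left_commute)
  also have "\<dots> = kmult_vec S A (\<lambda>a. kmult_vec T B (F a) e0) a0"
    by (subst sum.swap) (simp add: kmult_vec_def sum_distrib_left)
  finally show ?thesis .
qed

section \<open>Configurations of a region and its complement\<close>

lemma finite_confX: "finite (confX d (X :: 'v :: finite set))"
proof -
  have "confX d X \<subseteq> PiE UNIV (\<lambda>v. {..d v})"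
    by (auto simp: confX_def PiE_def extensional_def) (metis less_imp_le_nat zero_le)
  then show ?thesis
    by (rule finite_subset) (simp add: finite_PiE)
qed

lemma restr_merge: "a \<in> confX d X \<Longrightarrow> restr X (merge X a e) = a"
  by (auto simp: restr_def merge_def confX_def fun_eq_iff)

lemma restr_compl_merge: "e \<in> confX d (- X) \<Longrightarrow> restr (- X) (merge X a e) = e"
  by (auto simp: restr_def merge_def confX_def fun_eq_iff)

lemma merge_in_conf: "a \<in> confX d X \<Longrightarrow> e \<in> confX d (- X) \<Longrightarrow> merge X a e \<in> conf d"
  by (auto simp: conf_def confX_def merge_def)

lemma restr_in_confX: "c \<in> conf d \<Longrightarrow> restr X c \<in> confX d X"
  by (auto simp: conf_def confX_def restr_def)

lemma merge_restr: "merge X (restr X c) (restr (- X) c) = c"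
  by (auto simp: fun_eq_iff merge_def restr_def)

lemma merge_merge: "merge X a' (merge X a e) = merge X a' e"
  by (auto simp: fun_eq_iff merge_def)

lemma bij_betw_merge:
  "bij_betw (\<lambda>(a, e). merge X a e) (confX d X \<times> confX d (- X)) (conf d)"
proof (rule bij_betwI[where g = "\<lambda>c. (restr X c, restr (- X) c)"])
  show "(\<lambda>(a, e). merge X a e) \<in> confX d X \<times> confX d (- X) \<rightarrow> conf d"
    by (auto intro: merge_in_conf)
  show "(\<lambda>c. (restr X c, restr (- X) c)) \<in> conf d \<rightarrow> confX d X \<times> confX d (- X)"
    using restr_in_confX by blast
qed (auto simp: restr_merge restr_compl_merge merge_restr)

lemma sum_conf_merge:
  "(\<Sum>c\<in>conf d. G c) = (\<Sum>a\<in>confX d X. \<Sum>e\<in>confX d (- X). G (merge X a e))"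
proof -
  have "(\<Sum>c\<in>conf d. G c) = (\<Sum>x\<in>confX d X \<times> confX d (- X). G ((\<lambda>(a, e). merge X a e) x))"
    by (rule sum.reindex_bij_betw[OF bij_betw_merge, symmetric])
  also have "\<dots> = (\<Sum>(a, e)\<in>confX d X \<times> confX d (- X). G (merge X a e))"
    by (intro sum.cong) auto
  finally show ?thesis
    by (simp only: sum.cartesian_product)
qed

lemma bij_betw_confX_insert:
  assumes "w \<notin> Y"
  shows "bij_betw (\<lambda>(j, k). k(w := j)) ({..<d w} \<times> confX d Y) (confX d (insert w Y))"
proof (rule bij_betwI[where g = "\<lambda>c. (c w, c(w := 0))"])
  show "(\<lambda>(j, k). k(w := j)) \<in> {..<d w} \<times> confX d Y \<rightarrow> confX d (insert w Y)"
    using assms by (auto simp: confX_def)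
  show "(\<lambda>c. (c w, c(w := 0))) \<in> confX d (insert w Y) \<rightarrow> {..<d w} \<times> confX d Y"
    using assms by (auto simp: confX_def)
qed (use assms in \<open>auto simp: confX_def fun_eq_iff\<close>)

lemma sum_confX_prod:
  "finite Y \<Longrightarrow> (\<Sum>k\<in>confX d Y. \<Prod>v\<in>Y. g v (k v)) = (\<Prod>v\<in>Y. \<Sum>j<d v. (g v j :: complex))"
proof (induction Y rule: finite_induct)
  case empty
  have "confX d {} = {\<lambda>_. 0}"
    by (auto simp: confX_def)
  then show ?case
    by simp
next
  case (insert w Y)
  have "(\<Sum>k\<in>confX d (insert w Y). \<Prod>v\<in>insert w Y. g v (k v))
      = (\<Sum>x\<in>{..<d w} \<times> confX d Y. \<Prod>v\<in>insert w Y. g v (((\<lambda>(j, k). k(w := j)) x) v))"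
    by (rule sum.reindex_bij_betw[OF bij_betw_confX_insert[OF insert(2)], symmetric])
  also have "\<dots> = (\<Sum>(j, k)\<in>{..<d w} \<times> confX d Y. \<Prod>v\<in>insert w Y. g v ((k(w := j)) v))"
    by (intro sum.cong) auto
  also have "\<dots> = (\<Sum>(j, k)\<in>{..<d w} \<times> confX d Y. g w j * (\<Prod>v\<in>Y. g v (k v)))"
    using insert(1,2) by (intro sum.cong refl) (auto intro!: prod.cong)
  also have "\<dots> = (\<Sum>j<d w. g w j) * (\<Sum>k\<in>confX d Y. \<Prod>v\<in>Y. g v (k v))"
    by (simp add: sum.cartesian_product[symmetric] sum_product)
  finally show ?case
    using insert by simp
qed

section \<open>On-site unitaries commute with instantaneous modular flows\<close>

definition site_prod :: "('v \<Rightarrow> nat \<Rightarrow> nat \<Rightarrow> complex) \<Rightarrow> 'v set \<Rightarrow> ('v \<Rightarrow> nat) \<Rightarrow> ('v \<Rightarrow> nat) \<Rightarrow> complex" where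
  "site_prod Us Y a b = (\<Prod>v\<in>Y. Us v (a v) (b v))"

lemma unitary_on_site_prod:
  fixes d :: "'v::finite \<Rightarrow> nat"
  assumes U: "\<forall>v. unitary_site (d v) (Us v)"
  shows "unitary_on (confX d Y) (site_prod Us Y)"
  unfolding unitary_on_def
proof (intro ballI)
  fix a b assume a: "a \<in> confX d Y" and b: "b \<in> confX d Y"
  have "kmult (confX d Y) (kadj (site_prod Us Y)) (site_prod Us Y) a b
      = (\<Prod>v\<in>Y. \<Sum>j<d v. cnj (Us v j (a v)) * Us v j (b v))"
    using sum_confX_prod[OF finite[of Y], where d = d and g = "\<lambda>v j. cnj (Us v j (a v)) * Us v j (b v)"]
    by (simp add: kmult_def kadj_def site_prod_def prod.distrib[symmetric])
  also have "\<dots> = (\<Prod>v\<in>Y. if a v = b v then 1 else 0)"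
    using a b U by (intro prod.cong refl) (simp add: confX_def unitary_site_def)
  also have "\<dots> = (if a = b then 1 else 0)"
    using a b by (auto simp: confX_def fun_eq_iff prod_zero_iff) metis
  finally show "kmult (confX d Y) (kadj (site_prod Us Y)) (site_prod Us Y) a b = (if a = b then 1 else 0)" .
qed

lemma prod_UNIV_merge:
  fixes a :: "'v::finite \<Rightarrow> nat"
  shows "(\<Prod>v\<in>UNIV. Us v (merge X a e v) (merge X a' e' v)) = site_prod Us X a a' * site_prod Us (- X) e e'"
proof -
  have "(\<Prod>v\<in>UNIV. Us v (merge X a e v) (merge X a' e' v))
      = (\<Prod>v\<in>X. Us v (merge X a e v) (merge X a' e' v)) * (\<Prod>v\<in>- X. Us v (merge X a e v) (merge X a' e' v))"
    by (subst prod.union_disjoint[symmetric]) (auto intro: prod.cong)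
  also have "\<dots> = site_prod Us X a a' * site_prod Us (- X) e e'"
    unfolding site_prod_def by (intro arg_cong2[where f = "(*)"] prod.cong refl) (auto simp: merge_def)
  finally show ?thesis .
qed

lemma onsite_merge:
  fixes d :: "'v::finite \<Rightarrow> nat"
  assumes a: "a \<in> confX d X" and e: "e \<in> confX d (- X)"
  shows "onsite d Us \<phi> (merge X a e) = kmult_vec (confX d X) (site_prod Us X)
    (\<lambda>a'. kmult_vec (confX d (- X)) (site_prod Us (- X)) (\<lambda>e'. \<phi> (merge X a' e')) e) a"
proof -
  have "onsite d Us \<phi> (merge X a e) = (\<Sum>a'\<in>confX d X. \<Sum>e'\<in>confX d (- X).
      (\<Prod>v\<in>UNIV. Us v (merge X a e v) (merge X a' e' v)) * \<phi> (merge X a' e'))"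
    using merge_in_conf[OF a e] by (simp add: onsite_def sum_conf_merge[of _ _ X])
  then show ?thesis
    by (simp add: prod_UNIV_merge kmult_vec_def sum_distrib_left mult.assoc)
qed

lemma imf_merge:
  assumes "a \<in> confX d X" "e \<in> confX d (- X)"
  shows "imf d X t \<phi> (merge X a e) = kmult_vec (confX d X) (rho_it d X t \<phi>) (\<lambda>a'. \<phi> (merge X a' e)) a"
  using merge_in_conf[OF assms] by (simp add: imf_def restr_merge[OF assms(1)] merge_merge kmult_vec_def)

lemma hermitian_rdm: "hermitian_on (confX d X) (rdm d X \<phi>)"
  by (simp add: hermitian_on_def rdm_def mult.commute)

lemma rdm_onsite:
  fixes d :: "'v::finite \<Rightarrow> nat"
  assumes U: "\<forall>v. unitary_site (d v) (Us v)" and "a \<in> confX d X" "b \<in> confX d X"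
  shows "rdm d X (onsite d Us \<phi>) a b
    = kmult (confX d X) (kmult (confX d X) (site_prod Us X) (rdm d X \<phi>)) (kadj (site_prod Us X)) a b"
proof -
  let ?S = "confX d X" and ?T = "confX d (- X)"
  define Z where "Z i = kmult_vec ?T (site_prod Us (- X)) (\<lambda>e'. \<phi> (merge X i e'))" for i
  have "rdm d X (onsite d Us \<phi>) a b
      = (\<Sum>e\<in>?T. kmult_vec ?S (site_prod Us X) (\<lambda>i. Z i e) a
          * cnj (kmult_vec ?S (site_prod Us X) (\<lambda>j. Z j e) b))"
    unfolding rdm_def Z_def using assms(2,3)
    by (intro sum.cong refl) (simp add: onsite_merge)
  also have "\<dots> = kmult ?S (kmult ?S (site_prod Us X) (\<lambda>i j. \<Sum>e\<in>?T. Z i e * cnj (Z j e)))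
      (kadj (site_prod Us X)) a b"
    by (rule gram_kmult_vec)
  also have "(\<lambda>i j. \<Sum>e\<in>?T. Z i e * cnj (Z j e)) = rdm d X \<phi>"
  proof (intro ext)
    fix i j
    have "(\<Sum>e\<in>?T. Z i e * cnj (Z j e)) = inner_on ?T (Z j) (Z i)"
      by (simp add: inner_on_def mult.commute)
    also have "\<dots> = inner_on ?T (\<lambda>e'. \<phi> (merge X j e')) (\<lambda>e'. \<phi> (merge X i e'))"
      unfolding Z_def by (rule inner_on_unitary[OF finite_confX unitary_on_site_prod[OF U]])
    finally show "(\<Sum>e\<in>?T. Z i e * cnj (Z j e)) = rdm d X \<phi> i j"
      by (simp add: inner_on_def rdm_def mult.commute)
  qed
  finally show ?thesis .
qed

lemma rho_it_onsite:
  fixes d :: "'v::finite \<Rightarrow> nat"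
  assumes U: "\<forall>v. unitary_site (d v) (Us v)"
  shows "rho_it d X t (onsite d Us \<phi>) = (\<lambda>a b. if a \<in> confX d X \<and> b \<in> confX d X
    then kmult (confX d X) (kmult (confX d X) (site_prod Us X) (rho_it d X t \<phi>)) (kadj (site_prod Us X)) a b
    else 0)"
  unfolding rho_it_def
  by (intro mat_fun_eqI finite_confX hermitian_rdm is_mat_fun_conj[OF finite_confX
        unitary_on_site_prod[OF U] rdm_onsite[OF U] mat_fun_is_mat_fun[OF finite_confX hermitian_rdm]])

lemma onsite_imf_merge:
  fixes d :: "'v::finite \<Rightarrow> nat"
  assumes a: "a \<in> confX d X" and e: "e \<in> confX d (- X)"
  shows "onsite d Us (imf d X t \<phi>) (merge X a e) = kmult_vec (confX d X) (site_prod Us X)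
    (kmult_vec (confX d X) (rho_it d X t \<phi>)
      (\<lambda>a'. kmult_vec (confX d (- X)) (site_prod Us (- X)) (\<lambda>e'. \<phi> (merge X a' e')) e)) a"
  unfolding onsite_merge[OF a e]
proof (rule kmult_vec_cong)
  fix a' assume a': "a' \<in> confX d X"
  have "kmult_vec (confX d (- X)) (site_prod Us (- X)) (\<lambda>e'. imf d X t \<phi> (merge X a' e')) e
      = kmult_vec (confX d (- X)) (site_prod Us (- X))
          (\<lambda>e'. kmult_vec (confX d X) (rho_it d X t \<phi>) (\<lambda>a''. \<phi> (merge X a'' e')) a') e"
    by (intro kmult_vec_cong) (simp add: imf_merge[OF a'])
  then show "kmult_vec (confX d (- X)) (site_prod Us (- X)) (\<lambda>e'. imf d X t \<phi> (merge X a' e')) e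
      = kmult_vec (confX d X) (rho_it d X t \<phi>)
          (\<lambda>a''. kmult_vec (confX d (- X)) (site_prod Us (- X)) (\<lambda>e'. \<phi> (merge X a'' e')) e) a'"
    by (rule trans[OF _ kmult_vec_swap])
qed

lemma imf_onsite_merge:
  fixes d :: "'v::finite \<Rightarrow> nat"
  assumes U: "\<forall>v. unitary_site (d v) (Us v)"
    and a: "a \<in> confX d X" and e: "e \<in> confX d (- X)"
  shows "imf d X t (onsite d Us \<phi>) (merge X a e) = kmult_vec (confX d X) (site_prod Us X)
    (kmult_vec (confX d X) (rho_it d X t \<phi>)
      (\<lambda>a'. kmult_vec (confX d (- X)) (site_prod Us (- X)) (\<lambda>e'. \<phi> (merge X a' e')) e)) a"
proof -
  let ?S = "confX d X" and ?UX = "site_prod Us X" and ?\<rho> = "rho_it d X t \<phi>"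
  define z where "z = (\<lambda>a'. kmult_vec (confX d (- X)) (site_prod Us (- X)) (\<lambda>e'. \<phi> (merge X a' e')) e)"
  have "imf d X t (onsite d Us \<phi>) (merge X a e)
      = kmult_vec ?S (rho_it d X t (onsite d Us \<phi>)) (kmult_vec ?S ?UX z) a"
    unfolding imf_merge[OF a e] z_def by (intro kmult_vec_cong) (simp add: onsite_merge e)
  also have "\<dots> = kmult_vec ?S (kmult ?S (kmult ?S ?UX ?\<rho>) (kadj ?UX)) (kmult_vec ?S ?UX z) a"
    using a by (intro kmult_vec_cong_kernel) (simp add: rho_it_onsite[OF U])
  also have "\<dots> = kmult_vec ?S ?UX (kmult_vec ?S ?\<rho> (kmult_vec ?S (kadj ?UX) (kmult_vec ?S ?UX z))) a"
    by (simp only: kmult_vec_kmult)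
  also have "\<dots> = kmult_vec ?S ?UX (kmult_vec ?S ?\<rho> z) a"
    using unitary_on_cancel[OF finite_confX unitary_on_site_prod[OF U]]
    by (intro kmult_vec_cong) simp
  finally show ?thesis
    by (simp only: z_def)
qed

lemma onsite_imf:
  fixes d :: "'v::finite \<Rightarrow> nat"
  assumes U: "\<forall>v. unitary_site (d v) (Us v)"
  shows "onsite d Us (imf d X t \<phi>) = imf d X t (onsite d Us \<phi>)"
proof
  fix c
  show "onsite d Us (imf d X t \<phi>) c = imf d X t (onsite d Us \<phi>) c"
  proof (cases "c \<in> conf d")
    case True
    then have "restr X c \<in> confX d X" "restr (- X) c \<in> confX d (- X)"
      by (simp_all add: restr_in_confX)
    then show ?thesis
      using onsite_imf_merge imf_onsite_merge[OF U] merge_restr by metis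
  qed (simp add: onsite_def imf_def)
qed

lemma onsite_seqflow:
  fixes d :: "'v::finite \<Rightarrow> nat"
  assumes U: "\<forall>v. unitary_site (d v) (Us v)"
  shows "onsite d Us (seqflow d A ts j k \<phi>) = seqflow d A ts j k (onsite d Us \<phi>)"
  by (induction k) (simp_all add: onsite_imf[OF U])

lemma seqflow_add: "seqflow d A ts j (m + k) \<phi> = seqflow d A ts (j + m) k (seqflow d A ts j m \<phi>)"
  by (induction k) (simp_all add: add.assoc)

theorem lemma5:
  fixes d :: "'v::finite \<Rightarrow> nat"
    and Us :: "'v \<Rightarrow> nat \<Rightarrow> nat \<Rightarrow> complex"
    and \<psi> :: "('v \<Rightarrow> nat) \<Rightarrow> complex"
    and A :: "nat \<Rightarrow> 'v set" and ts :: "nat \<Rightarrow> real" and n i :: nat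
  assumes "\<forall>c. c \<notin> conf d \<longrightarrow> \<psi> c = 0"
    and "\<forall>v. unitary_site (d v) (Us v)"
    and "i \<in> {1..n+1}"
  shows "onsite d Us (seqflow d A ts 1 n \<psi>)
       = seqflow d A ts i (n + 1 - i) (onsite d Us (seqflow d A ts 1 (i - 1) \<psi>))"
proof -
  have "n = (i - 1) + (n + 1 - i)" "i = 1 + (i - 1)"
    using assms(3) by auto
  then have "seqflow d A ts 1 n \<psi> = seqflow d A ts i (n + 1 - i) (seqflow d A ts 1 (i - 1) \<psi>)"
    by (metis seqflow_add)
  then show ?thesis
    by (simp add: onsite_seqflow[OF assms(2)])
qed

end
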